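(* For every $n$-dimensional Hilbert space $\mathcal H$ and every $N\ge n$, the set $\mathcal F^{(1)}$ of $1$-erasure optimal $(N,n)$ dual pairs under the Frobenius norm is nonempty.
   Context: $\mathcal H$ is a complex Hilbert space of finite dimension $n$, inner product linear in the first argument. A finite sequence $F=\{f_i\}_{i=1}^N$ in $\mathcal H$ is a frame if there are constants $0<A\le B$ with $A\|f\|^2\le\sum_{i=1}^N|\langle f,f_i\rangle|^2\le B\|f\|^2$ for all $f$. A sequence $G=\{g_i\}_{i=1}^N$ is a dual of the frame $F$ if $f=\sum_{i=1}^N\langle f,g_i\rangle f_i$ for all $f\in\mathcal H$; then $(F,G)$ is an $(N,n)$ dual pair. The error operator for $\Lambda\subseteq\{1,\dots,N\}$ is $E_{\Lambda,F,G}f=\sum_{i\in\Lambda}\langle f,f_i\rangle g_i$. With $\|T\|_{\mathcal F}=\sqrt{\operatorname{tr}(T^*T)}$, set $\epsilon^{(1)}_{F,G}=\max_{1\le i\le N}\|E_{\{i\},F,G}\|_{\mathcal F}$, $\epsilon^{(1)}=\inf\{\epsilon^{(1)}_{F,G}:(F,G)\text{ an }(N,n)\text{ dual pair}\}$ and $\mathcal F^{(1)}=\{(F,G):\epsilon^{(1)}_{F,G}=\epsilon^{(1)}\}$. *)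

theory Defs
  imports "HOL-Analysis.Analysis"
begin

text \<open>The n-dimensional complex Hilbert space is modelled as complex^'n with
  n = CARD('n) and the standard inner product, linear in the first argument.
  Sequences of length N are functions on nat, of which only indices 0..N-1 are used.\<close>

definition cinner :: "complex^'n \<Rightarrow> complex^'n \<Rightarrow> complex" where
  "cinner x y = (\<Sum>j\<in>UNIV. x$j * cnj (y$j))"

definition is_frame :: "nat \<Rightarrow> (nat \<Rightarrow> complex^'n) \<Rightarrow> bool" where
  "is_frame N F \<longleftrightarrow> (\<exists>A B. 0 < A \<and> A \<le> B \<and>
     (\<forall>f. A * (norm f)^2 \<le> (\<Sum>i<N. (cmod (cinner f (F i)))^2) \<and>
          (\<Sum>i<N. (cmod (cinner f (F i)))^2) \<le> B * (norm f)^2))"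

definition is_dual :: "nat \<Rightarrow> (nat \<Rightarrow> complex^'n) \<Rightarrow> (nat \<Rightarrow> complex^'n) \<Rightarrow> bool" where
  "is_dual N F G \<longleftrightarrow> (\<forall>f. f = (\<Sum>i<N. cinner f (G i) *s F i))"

definition dual_pair :: "nat \<Rightarrow> (nat \<Rightarrow> complex^'n) \<Rightarrow> (nat \<Rightarrow> complex^'n) \<Rightarrow> bool" where
  "dual_pair N F G \<longleftrightarrow> is_frame N F \<and> is_dual N F G"

definition err_op :: "nat set \<Rightarrow> (nat \<Rightarrow> complex^'n) \<Rightarrow> (nat \<Rightarrow> complex^'n) \<Rightarrow> complex^'n \<Rightarrow> complex^'n" where
  "err_op L F G f = (\<Sum>i\<in>L. cinner f (F i) *s G i)"

definition op_matrix :: "(complex^'n \<Rightarrow> complex^'n) \<Rightarrow> complex^'n^'n" where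
  "op_matrix T = (\<chi> i j. (T (axis j 1))$i)"

definition cadjoint :: "complex^'n^'n \<Rightarrow> complex^'n^'n" where
  "cadjoint A = (\<chi> i j. cnj (A$j$i))"

definition frob_norm :: "(complex^'n \<Rightarrow> complex^'n) \<Rightarrow> real" where
  "frob_norm T = sqrt (Re (trace (cadjoint (op_matrix T) ** op_matrix T)))"

definition eps1_pair :: "nat \<Rightarrow> (nat \<Rightarrow> complex^'n) \<Rightarrow> (nat \<Rightarrow> complex^'n) \<Rightarrow> real" where
  "eps1_pair N F G = Max ((\<lambda>i. frob_norm (err_op {i} F G)) ` {..<N})"

definition eps1 :: "nat \<Rightarrow> ('n::finite) itself \<Rightarrow> real" where
  "eps1 N _ = Inf {eps1_pair N F G | F G :: nat \<Rightarrow> complex^'n. dual_pair N F G}"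

definition optimal1 :: "nat \<Rightarrow> ((nat \<Rightarrow> complex^'n) \<times> (nat \<Rightarrow> complex^'n)) set" where
  "optimal1 N = {(F, G). dual_pair N F G \<and> eps1_pair N F G = eps1 N TYPE('n)}"

end

theory Submission imports Defs begin

text \<open>The single-erasure error operator of the i-th pair is the rank-one operator
  f \<mapsto> <f, f_i> g_i, whose Frobenius norm is |f_i| |g_i|. Duality forces
  sum_i <f_i, g_i> = tr I = n, so by Cauchy-Schwarz every dual pair has
  N * eps1_pair >= n. The harmonic frame, built from n distinct columns of the N x N
  discrete Fourier matrix, is a self-dual Parseval frame of equal-norm vectors with
  |h_i|^2 = n/N, so it attains this bound and therefore lies in the optimal set.\<close>

lemma cinner_axis_left: "cinner (axis b 1) x = cnj (x $ b)"
proof -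
  have "cinner (axis b 1) x = (\<Sum>j\<in>UNIV. if j = b then cnj (x $ j) else 0)"
    unfolding cinner_def axis_def by (intro sum.cong) auto
  thus ?thesis by simp
qed

lemma cinner_sum_left: "cinner (\<Sum>i\<in>A. x i) y = (\<Sum>i\<in>A. cinner (x i) y)"
  unfolding cinner_def by (simp add: sum_component sum_distrib_right sum.swap[of _ A])

lemma cinner_scale_left: "cinner (c *s x) y = c * cinner x y"
  unfolding cinner_def by (simp add: sum_distrib_left mult.assoc)

lemma cnj_cinner: "cnj (cinner x y) = cinner y x"
  unfolding cinner_def by (simp add: mult.commute)

lemma complex_of_real_cmod_square: "(complex_of_real (cmod z))\<^sup>2 = z * cnj z"
  by (metis complex_norm_square of_real_power)

lemma norm_vec_square: "(norm (x::complex^'n))\<^sup>2 = (\<Sum>j\<in>UNIV. (cmod (x $ j))\<^sup>2)"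
  by (simp add: norm_vec_def L2_set_def sum_nonneg)

lemma cinner_self: "cinner x x = complex_of_real ((norm x)\<^sup>2)"
  unfolding cinner_def norm_vec_square by (simp add: complex_of_real_cmod_square)

lemma cinner_norm_le: "cmod (cinner u v) \<le> norm (u::complex^'n) * norm v"
proof -
  have "cmod (cinner u v) \<le> (\<Sum>j\<in>UNIV. \<bar>cmod (u $ j)\<bar> * \<bar>cmod (v $ j)\<bar>)"
    unfolding cinner_def by (rule order_trans[OF norm_sum]) (simp add: norm_mult)
  also have "\<dots> \<le> norm u * norm v"
    unfolding norm_vec_def by (rule L2_set_mult_ineq)
  finally show ?thesis .
qed

lemma frob_norm_rank_one: "frob_norm (\<lambda>f. cinner f u *s v) = norm (u::complex^'n) * norm (v::complex^'n)"
proof -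
  let ?M = "op_matrix (\<lambda>f. cinner f u *s v)"
  have "trace (cadjoint ?M ** ?M)
      = (\<Sum>k\<in>UNIV. \<Sum>a\<in>UNIV. complex_of_real ((cmod (u $ k))\<^sup>2 * (cmod (v $ a))\<^sup>2))"
    unfolding trace_def cadjoint_def op_matrix_def matrix_matrix_mult_def
    by (simp add: cinner_axis_left complex_of_real_cmod_square mult_ac)
  also have "\<dots> = complex_of_real ((norm u)\<^sup>2 * (norm v)\<^sup>2)"
    by (simp add: norm_vec_square sum_distrib_left sum_distrib_right) (rule sum.swap)
  finally show ?thesis
    unfolding frob_norm_def by (simp add: real_sqrt_mult)
qed

lemma eps1_pair_eq_Max_norm_mult:
  "eps1_pair N F G = Max ((\<lambda>i. norm (F i) * norm (G i)) ` {..<N})"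
proof -
  have "err_op {i} F G = (\<lambda>f. cinner f (F i) *s G i)" for i
    by (simp add: err_op_def fun_eq_iff)
  thus ?thesis unfolding eps1_pair_def by (simp add: frob_norm_rank_one)
qed

lemma is_dual_trace:
  assumes "is_dual N F G"
  shows "(\<Sum>i<N. cinner (F i) (G i :: complex^'n::finite)) = of_nat CARD('n)"
proof -
  have diagonal: "(\<Sum>i<N. F i $ k * cnj (G i $ k)) = 1" for k :: 'n
  proof -
    have "axis k 1 = (\<Sum>i<N. cinner (axis k 1) (G i) *s F i)"
      using assms unfolding is_dual_def by blast
    hence "axis k 1 $ k = (\<Sum>i<N. cinner (axis k 1) (G i) *s F i) $ k" by simp
    thus ?thesis by (simp add: cinner_axis_left sum_component mult.commute)
  qed
  have "(\<Sum>i<N. cinner (F i) (G i)) = (\<Sum>k\<in>UNIV. \<Sum>i<N. F i $ k * cnj (G i $ k))"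
    unfolding cinner_def by (rule sum.swap)
  also have "\<dots> = of_nat CARD('n)" by (simp add: diagonal)
  finally show ?thesis .
qed

lemma eps1_pair_lower_bound:
  assumes "is_dual N F G" "0 < N"
  shows "real CARD('n::finite) \<le> real N * eps1_pair N F (G :: nat \<Rightarrow> complex^'n)"
proof -
  have "real CARD('n) = cmod (\<Sum>i<N. cinner (F i) (G i))"
    by (simp add: is_dual_trace[OF assms(1)])
  also have "\<dots> \<le> (\<Sum>i<N. norm (F i) * norm (G i))"
    by (rule order_trans[OF norm_sum]) (intro sum_mono cinner_norm_le)
  also have "\<dots> \<le> (\<Sum>i<N. eps1_pair N F G)"
    unfolding eps1_pair_eq_Max_norm_mult by (intro sum_mono Max_ge) auto
  finally show ?thesis by simp
qed

lemma optimal1_if_eps1_pair_attains_bound: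
  assumes "dual_pair N F G" "0 < N"
    and "eps1_pair N F G = real CARD('n::finite) / real N"
  shows "(F, G :: nat \<Rightarrow> complex^'n) \<in> optimal1 N"
proof -
  have "eps1 N TYPE('n) = real CARD('n) / real N"
    unfolding eps1_def
  proof (rule cInf_eq_minimum)
    show "real CARD('n) / real N \<in> {eps1_pair N F G |F G :: nat \<Rightarrow> complex^'n. dual_pair N F G}"
      using assms(1,3) by force
  next
    fix x assume "x \<in> {eps1_pair N F G |F G :: nat \<Rightarrow> complex^'n. dual_pair N F G}"
    then obtain F' G' :: "nat \<Rightarrow> complex^'n" where "dual_pair N F' G'" "x = eps1_pair N F' G'"
      by blast
    hence "real CARD('n) \<le> real N * x"
      using eps1_pair_lower_bound[OF _ assms(2)] unfolding dual_pair_def by blast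
    thus "real CARD('n) / real N \<le> x"
      using assms(2) by (simp add: divide_le_eq mult.commute)
  qed
  thus ?thesis unfolding optimal1_def using assms(1,3) by simp
qed

lemma is_dual_self_Parseval:
  assumes "is_dual N h h"
  shows "(\<Sum>i<N. (cmod (cinner f (h i)))\<^sup>2) = (norm (f::complex^'n))\<^sup>2"
proof -
  have "complex_of_real ((norm f)\<^sup>2) = cinner (\<Sum>i<N. cinner f (h i) *s h i) f"
    using assms unfolding is_dual_def by (metis cinner_self)
  also have "\<dots> = (\<Sum>i<N. cinner f (h i) * cnj (cinner f (h i)))"
    by (simp add: cinner_sum_left cinner_scale_left cnj_cinner)
  also have "\<dots> = complex_of_real (\<Sum>i<N. (cmod (cinner f (h i)))\<^sup>2)"
    by (simp add: complex_of_real_cmod_square)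
  finally show ?thesis by (metis of_real_eq_iff)
qed

lemma is_dual_self_imp_dual_pair:
  assumes "is_dual N h h"
  shows "dual_pair N h (h :: nat \<Rightarrow> complex^'n)"
  unfolding dual_pair_def is_frame_def
  using assms is_dual_self_Parseval[OF assms] by (intro conjI exI[of _ 1]) auto

lemma is_dual_self_if_orthonormal_columns:
  assumes "\<And>a b. (\<Sum>i<N. cnj (h i $ a) * h i $ b) = (if a = b then 1 else 0)"
  shows "is_dual N h (h :: nat \<Rightarrow> complex^'n)"
  unfolding is_dual_def
proof (intro allI vec_eq_iff[THEN iffD2] allI)
  fix f :: "complex^'n" and k
  have "(\<Sum>i<N. cinner f (h i) *s h i) $ k = (\<Sum>i<N. \<Sum>j\<in>UNIV. f $ j * (cnj (h i $ j) * h i $ k))"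
    by (simp add: sum_component cinner_def sum_distrib_left mult_ac)
  also have "\<dots> = (\<Sum>j\<in>UNIV. f $ j * (\<Sum>i<N. cnj (h i $ j) * h i $ k))"
    by (subst sum.swap) (simp add: sum_distrib_left)
  also have "\<dots> = f $ k"
    by (simp add: assms if_distrib cong: if_cong)
  finally show "f $ k = (\<Sum>i<N. cinner f (h i) *s h i) $ k" by simp
qed

lemma sum_powers_root_of_unity:
  fixes d :: int
  assumes "0 < N" "\<bar>d\<bar> < int N"
  shows "(\<Sum>i<N. exp (2 * pi * \<i> * of_int d / of_nat N) ^ i) = (if d = 0 then of_nat N else 0)"
proof (cases "d = 0")
  case False
  let ?z = "exp (2 * pi * \<i> * of_int d / of_nat N)"
  have "?z \<noteq> 1"
  proof
    assume "?z = 1"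
    then obtain m :: int where "2 * pi * of_int d / of_nat N = of_int (2 * m) * pi"
      unfolding exp_eq_1 by auto
    hence "of_int d = of_int m * (of_nat N :: real)"
      using assms(1) by (simp add: field_simps)
    hence "d = m * int N" by (metis of_int_eq_iff of_int_mult of_int_of_nat_eq)
    with False assms(2) show False
      by (simp add: abs_mult mult_le_cancel_right1 int_one_le_iff_zero_less)
  qed
  moreover have "?z ^ N = 1"
  proof -
    have "?z ^ N = exp (of_nat N * (2 * pi * \<i> * of_int d / of_nat N))"
      by (simp only: exp_of_nat_mult)
    also have "\<dots> = exp (2 * pi * \<i> * of_int d)"
      using assms(1) by simp
    also have "\<dots> = 1"
      unfolding exp_eq_1 by (intro conjI exI[of _ d]) simp_all
    finally show ?thesis .
  qed
  ultimately show ?thesis using False by (simp add: sum_gp_strict)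
qed simp

definition harmonic_frame :: "nat \<Rightarrow> ('n::finite \<Rightarrow> nat) \<Rightarrow> nat \<Rightarrow> complex^'n" where
  "harmonic_frame N idx i =
     (\<chi> j. exp (2 * pi * \<i> * of_nat (i * idx j) / of_nat N) / of_real (sqrt (real N)))"

lemma harmonic_frame_product:
  assumes "0 < N"
  shows "cnj (harmonic_frame N idx i $ a) * harmonic_frame N idx i $ b
       = exp (2 * pi * \<i> * (of_int (int (idx b) - int (idx a))) / of_nat N) ^ i / of_nat N"
proof -
  let ?\<theta> = "\<lambda>k. 2 * pi * \<i> * of_nat (i * k) / (of_nat N :: complex)"
  have "- ?\<theta> (idx a) + ?\<theta> (idx b) = of_nat i * (2 * pi * \<i> * of_int (int (idx b) - int (idx a)) / of_nat N)"
    by (simp add: algebra_simps add_divide_distrib[symmetric] diff_divide_distrib[symmetric])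
  moreover have "of_real (sqrt (real N)) * of_real (sqrt (real N)) = (of_nat N :: complex)"
    by (simp flip: of_real_mult)
  ultimately show ?thesis
    unfolding harmonic_frame_def
    by (simp add: exp_cnj mult_exp_exp exp_of_nat_mult[symmetric])
qed

lemma harmonic_frame_orthonormal_columns:
  fixes idx :: "'n::finite \<Rightarrow> nat"
  assumes idx: "inj idx" "\<And>j. idx j < CARD('n)" and N: "CARD('n) \<le> N"
  shows "(\<Sum>i<N. cnj (harmonic_frame N idx i $ a) * harmonic_frame N idx i $ b)
       = (if a = b then 1 else 0 :: complex)"
proof -
  have N0: "0 < N" using N zero_less_card_finite[where 'a='n] by linarith
  define d where "d = int (idx b) - int (idx (a::'n))"
  have "\<bar>d\<bar> < int N" using idx(2)[of a] idx(2)[of b] N unfolding d_def by linarith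
  moreover have "d = 0 \<longleftrightarrow> a = b" using idx(1) unfolding d_def inj_def by auto
  ultimately show ?thesis
    using sum_powers_root_of_unity[OF N0] N0
    by (simp add: harmonic_frame_product[OF N0] d_def[symmetric] sum_divide_distrib[symmetric])
qed

lemma norm_harmonic_frame_square:
  assumes "0 < N"
  shows "(norm (harmonic_frame N idx i :: complex^'n::finite))\<^sup>2 = real CARD('n) / real N"
proof -
  have "(cmod (harmonic_frame N idx i $ j))\<^sup>2 = 1 / real N" for j
    unfolding harmonic_frame_def using assms by (simp add: norm_divide power_divide)
  thus ?thesis by (simp add: norm_vec_square)
qed

lemma eps1_pair_harmonic_frame:
  assumes "0 < N"
  shows "eps1_pair N (harmonic_frame N idx) (harmonic_frame N idx :: nat \<Rightarrow> complex^'n::finite)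
       = real CARD('n) / real N"
proof -
  have "(\<lambda>i. norm (harmonic_frame N idx i :: complex^'n) * norm (harmonic_frame N idx i)) ` {..<N}
      = {real CARD('n) / real N}"
    using assms norm_harmonic_frame_square[OF assms] by (auto simp: power2_eq_square)
  thus ?thesis unfolding eps1_pair_eq_Max_norm_mult by simp
qed

theorem corollary3p3:
  fixes N :: nat
  assumes "CARD('n::finite) \<le> N"
  shows "(optimal1 N :: ((nat \<Rightarrow> complex^'n) \<times> (nat \<Rightarrow> complex^'n)) set) \<noteq> {}"
proof -
  have N0: "0 < N" using assms zero_less_card_finite[where 'a='n] by linarith
  obtain idx :: "'n \<Rightarrow> nat" where "bij_betw idx UNIV {0..<CARD('n)}"
    using ex_bij_betw_finite_nat[of "UNIV::'n set"] by auto
  hence idx: "inj idx" "\<And>j. idx j < CARD('n)" by (auto simp: bij_betw_def)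
  let ?h = "harmonic_frame N idx :: nat \<Rightarrow> complex^'n"
  have "dual_pair N ?h ?h"
    by (intro is_dual_self_imp_dual_pair is_dual_self_if_orthonormal_columns
        harmonic_frame_orthonormal_columns[OF idx assms])
  hence "(?h, ?h) \<in> optimal1 N"
    by (intro optimal1_if_eps1_pair_attains_bound N0 eps1_pair_harmonic_frame)
  thus ?thesis by blast
qed

end
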